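(* Let $\Omega$ be a bounded domain in $\mathbb R^n$, $n\ge3$, and let $(f,\Gamma)$ satisfy the standing structural assumptions. If $0<w\in LSC(\Omega)$ is a viscosity super-solution of $f(\lambda(-A^u))=1$ in $\Omega$ with $w(x)\to+\infty$ as $\mathrm{dist}(x,\partial\Omega)\to0$, and if $\mathbb R^n\setminus\bar\Omega$ contains a ball $B_R(x_0)$, then $w\ge u^{(out)}_{R,x_0}>0$ in $\Omega$.
   Context: Let $n\ge3$. For a positive $C^2$ function $u$, its conformal Hessian is $A^u=-\frac{2}{n-2}u^{-\frac{n+2}{n-2}}\nabla^2u+\frac{2n}{(n-2)^2}u^{-\frac{2n}{n-2}}\nabla u\otimes\nabla u-\frac{2}{(n-2)^2}u^{-\frac{2n}{n-2}}|\nabla u|^2I$, and $\lambda(-A^u)$ is the vector of eigenvalues of $-A^u$. Let $\Gamma_n=\{\mu:\mu_i>0\ \forall i\}$. Standing structural assumptions on $(f,\Gamma)$: $\Gamma\subset\mathbb R^n$ is an open symmetric cone with vertex at the origin, $\Gamma+\Gamma_n\subset\Gamma$; $f\in C^0(\bar\Gamma)$ symmetric, $f>0$ in $\Gamma$, $f=0$ on $\partial\Gamma$, $f(\lambda+\mu)\ge f(\lambda)$ for $\lambda\in\Gamma,\mu\in\Gamma_n$, $f$ homogeneous of some positive degree. Viscosity super-solution: $w\in LSC(\Omega)$ (lower semicontinuous, values in $\mathbb R\cup\{+\infty\}$, $w\not\equiv+\infty$) such that for every $x_0\in\Omega$, $\varphi\in C^2(\Omega)$ with $(w-\varphi)(x_0)=0$,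 $w-\varphi\ge0$ near $x_0$, either $\lambda(-A^\varphi(x_0))\notin\bar\Gamma$ or $f(\lambda(-A^\varphi(x_0)))\le1$. Canonical solutions: there is a unique constant $\alpha=\alpha(f)>0$ such that for all $R>0$, $x_0\in\mathbb R^n$ the function $u^{(out)}_{R,x_0}(x)=\alpha\big(\frac{R}{|x-x_0|^2-R^2}\big)^{\frac{n-2}{2}}$ satisfies $f(\lambda(-A^{u}))=1$ in $\mathbb R^n\setminus\bar B_R(x_0)$ (and $u^{(in)}_{R,x_0}(x)=\alpha\big(\frac{R}{R^2-|x-x_0|^2}\big)^{\frac{n-2}{2}}$ satisfies it in $B_R(x_0)$). *)

theory Defs
  imports "HOL-Analysis.Analysis"
begin

(* Points of R^n are vectors real^'n, n = CARD('n). *)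

definition C2_on :: "(real^'n::finite) set \<Rightarrow> (real^'n \<Rightarrow> real) \<Rightarrow> bool" where
  "C2_on S \<phi> \<longleftrightarrow> (\<exists>D H. (\<forall>x\<in>S. (\<phi> has_derivative (\<lambda>h. D x \<bullet> h)) (at x))
      \<and> (\<forall>x\<in>S. (D has_derivative (\<lambda>h. H x *v h)) (at x))
      \<and> continuous_on S H)"

definition grad :: "(real^'n::finite \<Rightarrow> real) \<Rightarrow> real^'n \<Rightarrow> real^'n" where
  "grad \<phi> x = (\<chi> i. frechet_derivative \<phi> (at x) (axis i 1))"

definition hess :: "(real^'n::finite \<Rightarrow> real) \<Rightarrow> real^'n \<Rightarrow> real^'n^'n" where
  "hess \<phi> x = (\<chi> i j. frechet_derivative (\<lambda>y. grad \<phi> y $ i) (at x) (axis j 1))"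

definition outer :: "real^'n::finite \<Rightarrow> real^'n \<Rightarrow> real^'n^'n" where
  "outer a b = (\<chi> i j. a $ i * b $ j)"

definition confHess :: "(real^'n::finite \<Rightarrow> real) \<Rightarrow> real^'n \<Rightarrow> real^'n^'n" where
  "confHess u x =
     (let n = real CARD('n); v = u x; g = grad u x in
        (- (2 / (n - 2)) * v powr (- (n + 2) / (n - 2))) *\<^sub>R hess u x
      + ((2 * n / (n - 2)^2) * v powr (- 2 * n / (n - 2))) *\<^sub>R outer g g
      - ((2 / (n - 2)^2) * v powr (- 2 * n / (n - 2)) * (norm g)^2) *\<^sub>R mat 1)"

definition diag_mat :: "real^'n::finite \<Rightarrow> real^'n^'n" where
  "diag_mat \<mu> = (\<chi> i j. if i = j then \<mu> $ i else 0)"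

(* vector of eigenvalues of a symmetric matrix (ordering immaterial, f and \<Gamma> are symmetric) *)
definition eigvals :: "real^'n::finite^'n \<Rightarrow> real^'n" where
  "eigvals M = (SOME \<mu>. \<exists>P. orthogonal_matrix P \<and> M = transpose P ** diag_mat \<mu> ** P)"

definition pos_cone :: "(real^'n::finite) set" where
  "pos_cone = {\<mu>. \<forall>i. \<mu> $ i > 0}"

definition permute_vec :: "('n::finite \<Rightarrow> 'n) \<Rightarrow> real^'n \<Rightarrow> real^'n" where
  "permute_vec p \<mu> = (\<chi> i. \<mu> $ p i)"

definition structural :: "(real^'n::finite \<Rightarrow> real) \<Rightarrow> (real^'n) set \<Rightarrow> bool" where
  "structural f \<Gamma> \<longleftrightarrow>
     open \<Gamma> \<and> \<Gamma> \<noteq> {}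
   \<and> (\<forall>\<mu>\<in>\<Gamma>. \<forall>t>0. t *\<^sub>R \<mu> \<in> \<Gamma>)
   \<and> (\<forall>p \<mu>. p permutes UNIV \<and> \<mu> \<in> \<Gamma> \<longrightarrow> permute_vec p \<mu> \<in> \<Gamma>)
   \<and> (\<forall>\<mu>\<in>\<Gamma>. \<forall>\<nu>\<in>pos_cone. \<mu> + \<nu> \<in> \<Gamma>)
   \<and> continuous_on (closure \<Gamma>) f
   \<and> (\<forall>p \<mu>. p permutes UNIV \<and> \<mu> \<in> closure \<Gamma> \<longrightarrow> f (permute_vec p \<mu>) = f \<mu>)
   \<and> (\<forall>\<mu>\<in>\<Gamma>. f \<mu> > 0)
   \<and> (\<forall>\<mu>\<in>frontier \<Gamma>. f \<mu> = 0)
   \<and> (\<forall>\<mu>\<in>\<Gamma>. \<forall>\<nu>\<in>pos_cone. f (\<mu> + \<nu>) \<ge> f \<mu>)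
   \<and> (\<exists>d>0. \<forall>\<mu>\<in>closure \<Gamma>. \<forall>t>0. f (t *\<^sub>R \<mu>) = t powr d * f \<mu>)"

definition lsc_on :: "(real^'n::finite) set \<Rightarrow> (real^'n \<Rightarrow> ereal) \<Rightarrow> bool" where
  "lsc_on S w \<longleftrightarrow> (\<forall>x\<in>S. \<forall>c. c < w x \<longrightarrow> (\<exists>e>0. \<forall>y\<in>S. dist y x < e \<longrightarrow> c < w y))"

definition visc_super :: "(real^'n::finite \<Rightarrow> real) \<Rightarrow> (real^'n) set \<Rightarrow> (real^'n) set
                          \<Rightarrow> (real^'n \<Rightarrow> ereal) \<Rightarrow> bool" where
  "visc_super f \<Gamma> \<Omega> w \<longleftrightarrow>
     lsc_on \<Omega> w \<and> (\<forall>x\<in>\<Omega>. w x \<noteq> -\<infinity>) \<and> (\<exists>x\<in>\<Omega>. w x \<noteq> \<infinity>)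
   \<and> (\<forall>x0\<in>\<Omega>. \<forall>\<phi>. C2_on \<Omega> \<phi> \<and> w x0 = ereal (\<phi> x0)
        \<and> (\<exists>r>0. \<forall>x\<in>\<Omega> \<inter> ball x0 r. ereal (\<phi> x) \<le> w x)
        \<longrightarrow> eigvals (- confHess \<phi> x0) \<notin> closure \<Gamma>
            \<or> f (eigvals (- confHess \<phi> x0)) \<le> 1)"

definition u_out :: "real \<Rightarrow> real \<Rightarrow> real^'n::finite \<Rightarrow> real^'n \<Rightarrow> real" where
  "u_out \<alpha> R x0 x = \<alpha> * (R / ((norm (x - x0))^2 - R^2)) powr ((real CARD('n) - 2) / 2)"

end

(*
  For \<rho> < R the canonical solution v = u_out \<alpha> \<rho> x0 is smooth and bounded on \<Omega>, and its
  conformal Hessian is the scalar matrix -2 \<alpha>^(-4/(n-2)) I. Replacing \<alpha> by s \<alpha> multiplies the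
  eigenvalues by s^(-4/(n-2)), so by homogeneity of f every multiple s v with 0 < s < 1 is a strict
  sub-solution and cannot touch the super-solution w from below. Let s0 be the largest s with
  s v \<le> w in \<Omega>. If s0 < 1, then either s0 v touches w, which is impossible, or s0 v < w everywhere;
  in the latter case lower semicontinuity of w on a compact inner region and the blow-up of w at the
  boundary leave room for a slightly larger multiple, contradicting maximality. Hence v \<le> w, and
  letting \<rho> \<rightarrow> R gives the claim.
*)
theory Submission
  imports Defs
begin

section \<open>Radial functions and their conformal Hessian\<close>

lemma frechet_derivative_cong_open:
  assumes "open S" "x \<in> S" "\<And>z. z \<in> S \<Longrightarrow> \<phi> z = \<psi> z"
  shows "frechet_derivative \<phi> (at x) = frechet_derivative \<psi> (at x)"
proof -
  have "(\<phi> has_derivative D) (at x) \<longleftrightarrow> (\<psi> has_derivative D) (at x)" for D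
    using has_derivative_transform_within_open[OF _ assms(1,2)] assms(3) by metis
  then show ?thesis by (simp add: frechet_derivative_def)
qed

lemma grad_cong_open:
  assumes "open S" "x \<in> S" "\<And>z. z \<in> S \<Longrightarrow> \<phi> z = \<psi> z"
  shows "grad \<phi> x = grad \<psi> x"
  using frechet_derivative_cong_open[OF assms] by (simp add: grad_def)

lemma hess_cong_open:
  assumes "open S" "x \<in> S" "\<And>z. z \<in> S \<Longrightarrow> \<phi> z = \<psi> z"
  shows "hess \<phi> x = hess \<psi> x"
proof -
  have "\<And>z. z \<in> S \<Longrightarrow> grad \<phi> z $ i = grad \<psi> z $ i" for i
    using grad_cong_open[OF assms(1) _ assms(3)] by simp
  then have "frechet_derivative (\<lambda>y. grad \<phi> y $ i) (at x)
      = frechet_derivative (\<lambda>y. grad \<psi> y $ i) (at x)" for i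
    by (rule frechet_derivative_cong_open[OF assms(1,2)])
  then show ?thesis by (simp add: hess_def)
qed

lemma confHess_cong_open:
  assumes "open S" "x \<in> S" "\<And>z. z \<in> S \<Longrightarrow> \<phi> z = \<psi> z"
  shows "confHess \<phi> x = confHess \<psi> x"
  using grad_cong_open[OF assms] hess_cong_open[OF assms] assms(2,3)
  by (simp add: confHess_def)

lemma C2_on_cong_open:
  assumes "open S" "\<And>z. z \<in> S \<Longrightarrow> \<phi> z = \<psi> z" "C2_on S \<phi>"
  shows "C2_on S \<psi>"
  using assms has_derivative_transform_within_open[OF _ assms(1)] unfolding C2_on_def by metis

lemma grad_hess_eqI:
  fixes \<phi> :: "real^'n::finite \<Rightarrow> real"
  assumes S: "open S" "x \<in> S"
    and d1: "\<And>y. y \<in> S \<Longrightarrow> (\<phi> has_derivative (\<lambda>h. D y \<bullet> h)) (at y)"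
    and d2: "(D has_derivative (\<lambda>h. H *v h)) (at x)"
  shows "grad \<phi> x = D x" "hess \<phi> x = H"
proof -
  have g: "grad \<phi> y = D y" if "y \<in> S" for y
  proof -
    have "frechet_derivative \<phi> (at y) = (\<lambda>h. D y \<bullet> h)"
      using frechet_derivative_at[OF d1[OF that]] by simp
    then show ?thesis by (simp add: grad_def vec_eq_iff inner_axis)
  qed
  then show "grad \<phi> x = D x" using S by simp
  have "((\<lambda>y. grad \<phi> y $ i) has_derivative (\<lambda>h. (H *v h) $ i)) (at x)" for i
  proof (rule has_derivative_transform_within_open[OF _ S])
    show "((\<lambda>y. D y $ i) has_derivative (\<lambda>h. (H *v h) $ i)) (at x)"
      using bounded_linear.has_derivative[OF bounded_linear_vec_nth d2] .
  qed (use g in simp)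
  then have "frechet_derivative (\<lambda>y. grad \<phi> y $ i) (at x) = (\<lambda>h. (H *v h) $ i)" for i
    using frechet_derivative_at by metis
  then show "hess \<phi> x = H"
    by (simp add: hess_def vec_eq_iff matrix_vector_mult_def axis_def if_distrib cong: if_cong)
qed

lemma has_derivative_dist_sq:
  fixes x y :: "'a::real_inner"
  shows "((\<lambda>x. (x - y) \<bullet> (x - y) - c) has_derivative (\<lambda>h. 2 * ((x - y) \<bullet> h))) (at x)"
proof -
  have d: "((\<lambda>x. x - y) has_derivative (\<lambda>h. h)) (at x)"
    using has_derivative_diff[OF has_derivative_ident has_derivative_const] by simp
  show ?thesis
    using has_derivative_diff[OF has_derivative_inner[OF d d] has_derivative_const, of c]
    by (simp add: inner_commute)
qed

definition radial :: "real \<Rightarrow> real \<Rightarrow> real \<Rightarrow> 'a::real_inner \<Rightarrow> 'a \<Rightarrow> real" where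
  "radial K q c y x = K * ((x - y) \<bullet> (x - y) - c) powr q"

definition radial_grad :: "real \<Rightarrow> real \<Rightarrow> real \<Rightarrow> 'a::real_inner \<Rightarrow> 'a \<Rightarrow> 'a" where
  "radial_grad K q c y x = (2 * q * K * ((x - y) \<bullet> (x - y) - c) powr (q - 1)) *\<^sub>R (x - y)"

definition radial_hess :: "real \<Rightarrow> real \<Rightarrow> real \<Rightarrow> real^'n::finite \<Rightarrow> real^'n \<Rightarrow> real^'n^'n" where
  "radial_hess K q c y x =
     (2 * q * K * ((x - y) \<bullet> (x - y) - c) powr (q - 1)) *\<^sub>R mat 1
   + (4 * q * (q - 1) * K * ((x - y) \<bullet> (x - y) - c) powr (q - 2)) *\<^sub>R outer (x - y) (x - y)"

lemma has_derivative_radial: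
  fixes x y :: "'a::real_inner"
  assumes "c < (x - y) \<bullet> (x - y)"
  shows "(radial K q c y has_derivative (\<lambda>h. radial_grad K q c y x \<bullet> h)) (at x)"
proof -
  let ?P = "(x - y) \<bullet> (x - y) - c"
  have P: "0 < ?P" using assms by simp
  have "(radial K q c y has_derivative
      (\<lambda>h. K * (?P powr q * (0 * ln ?P + 2 * ((x - y) \<bullet> h) * q / ?P)))) (at x)"
    unfolding radial_def
    by (intro has_derivative_mult_right has_derivative_powr[OF has_derivative_dist_sq has_derivative_const P]) simp
  moreover have "?P powr (q - 1) = ?P powr q / ?P" using P by (simp add: powr_diff)
  then have "(\<lambda>h. K * (?P powr q * (0 * ln ?P + 2 * ((x - y) \<bullet> h) * q / ?P)))
      = (\<lambda>h. radial_grad K q c y x \<bullet> h)"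
    by (intro ext) (simp only: radial_grad_def inner_scaleR_left, simp add: field_simps)
  ultimately show ?thesis by simp
qed

lemma outer_mult_vector: "outer a a *v h = (a \<bullet> h) *\<^sub>R (a::real^'n::finite)"
  by (simp add: vec_eq_iff outer_def matrix_vector_mult_def inner_vec_def sum_distrib_left mult_ac)

lemma has_derivative_radial_grad:
  fixes x y :: "real^'n::finite"
  assumes "c < (x - y) \<bullet> (x - y)"
  shows "(radial_grad K q c y has_derivative (\<lambda>h. radial_hess K q c y x *v h)) (at x)"
proof -
  let ?P = "(x - y) \<bullet> (x - y) - c"
  have P: "0 < ?P" using assms by simp
  have d: "((\<lambda>x. x - y) has_derivative (\<lambda>h. h)) (at x)"
    using has_derivative_diff[OF has_derivative_ident has_derivative_const] by simp
  have "(radial_grad K q c y has_derivative (\<lambda>h.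
      (2 * q * K * ?P powr (q - 1)) *\<^sub>R h
    + (2 * q * K * (?P powr (q - 1) * (0 * ln ?P + 2 * ((x - y) \<bullet> h) * (q - 1) / ?P))) *\<^sub>R (x - y))) (at x)"
    unfolding radial_grad_def
    by (intro has_derivative_scaleR[OF _ d] has_derivative_mult_right
        has_derivative_powr[OF has_derivative_dist_sq has_derivative_const P]) simp
  moreover have "?P powr (q - 2) = ?P powr (q - 1) / ?P"
    using P powr_diff[of ?P "q - 1" 1] by simp
  then have "(\<lambda>h. (2 * q * K * ?P powr (q - 1)) *\<^sub>R h
    + (2 * q * K * (?P powr (q - 1) * (0 * ln ?P + 2 * ((x - y) \<bullet> h) * (q - 1) / ?P))) *\<^sub>R (x - y))
      = (\<lambda>h. radial_hess K q c y x *v h)"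
    by (intro ext) (simp only: radial_hess_def matrix_vector_mult_add_rdistrib
        scaleR_matrix_vector_assoc[symmetric] matrix_vector_mul_lid outer_mult_vector, simp)
  ultimately show ?thesis by simp
qed

lemma continuous_on_radial_hess:
  "continuous_on {x. c < (x - y) \<bullet> (x - y)} (radial_hess K q c (y::real^'n::finite))"
proof -
  let ?U = "{x. c < (x - y) \<bullet> (x - y)}"
  have P: "continuous_on ?U (\<lambda>x. ((x - y) \<bullet> (x - y) - c) powr e)" for e
    by (intro continuous_on_powr continuous_intros) auto
  have O: "continuous_on ?U (\<lambda>x. outer (x - y) (x - y))"
    unfolding outer_def by (intro continuous_on_vec_lambda continuous_intros)
  show ?thesis
    unfolding radial_hess_def by (intro continuous_intros P O)
qed

lemma C2_on_radial:
  assumes "S \<subseteq> {x. c < (x - y) \<bullet> (x - y)}"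
  shows "C2_on S (radial K q c (y::real^'n::finite))"
  unfolding C2_on_def
proof (intro exI conjI ballI)
  fix x assume "x \<in> S"
  then have "c < (x - y) \<bullet> (x - y)" using assms by blast
  then show "(radial K q c y has_derivative (\<lambda>h. radial_grad K q c y x \<bullet> h)) (at x)"
    and "(radial_grad K q c y has_derivative (\<lambda>h. radial_hess K q c y x *v h)) (at x)"
    by (rule has_derivative_radial, rule has_derivative_radial_grad)
next
  show "continuous_on S (radial_hess K q c y)"
    using continuous_on_subset[OF continuous_on_radial_hess assms] .
qed

lemma grad_hess_radial:
  fixes x y :: "real^'n::finite"
  assumes "c < (x - y) \<bullet> (x - y)"
  shows "grad (radial K q c y) x = radial_grad K q c y x" "hess (radial K q c y) x = radial_hess K q c y x"
proof -
  have "open {z. c < (z - y) \<bullet> (z - y)}" by (intro open_Collect_less continuous_intros)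
  from grad_hess_eqI[OF this _ has_derivative_radial has_derivative_radial_grad] assms
  show "grad (radial K q c y) x = radial_grad K q c y x" "hess (radial K q c y) x = radial_hess K q c y x"
    by auto
qed

lemma outer_scaleR: "outer (a *\<^sub>R u) (b *\<^sub>R v) = (a * b) *\<^sub>R outer u (v::real^'n::finite)"
  by (simp add: vec_eq_iff outer_def)

lemma radial_conformal_powr_identities:
  fixes N K P :: real
  defines "q \<equiv> - ((N - 2) / 2)" and "E \<equiv> K powr (-4 / (N - 2))"
  assumes N: "N > 2" and K: "K > 0" and P: "P > 0"
  shows "(K * P powr q) powr (-(N + 2) / (N - 2)) * (2 * q * K * P powr (q - 1)) = -(N - 2) * E * P"
    and "(K * P powr q) powr (-(N + 2) / (N - 2)) * (4 * q * (q - 1) * K * P powr (q - 2)) = N * (N - 2) * E"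
    and "(K * P powr q) powr (-2 * N / (N - 2)) * (2 * q * K * P powr (q - 1))^2 = (N - 2)^2 * E"
proof -
  have v_powr: "(K * P powr q) powr e = K powr e * P powr (q * e)" for e
    by (simp only: powr_mult powr_powr)
  have "q * (-(N + 2) / (N - 2)) = (N + 2) / 2" "q * (-2 * N / (N - 2)) = N"
    using N by (simp_all add: q_def field_simps)
  then have A: "(K * P powr q) powr (-(N + 2) / (N - 2)) = K powr (-(N + 2) / (N - 2)) * P powr ((N + 2) / 2)"
    and B: "(K * P powr q) powr (-2 * N / (N - 2)) = K powr (-2 * N / (N - 2)) * P powr N"
    by (simp_all only: v_powr)
  have "-(N + 2) / (N - 2) + 1 = -4 / (N - 2)" "-2 * N / (N - 2) + 2 = -4 / (N - 2)"
    using N by (simp_all add: field_simps)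
  moreover have "K powr (-(N + 2) / (N - 2)) * K = K powr (-(N + 2) / (N - 2) + 1)"
    "K powr (-2 * N / (N - 2)) * K^2 = K powr (-2 * N / (N - 2) + 2)"
    using K powr_add[of K "-2 * N / (N - 2)" 2] by (simp_all add: powr_add powr_numeral)
  ultimately have KA: "K powr (-(N + 2) / (N - 2)) * K = E" and KB: "K powr (-2 * N / (N - 2)) * K^2 = E"
    by (simp_all add: E_def)
  have e: "(N + 2) / 2 + (q - 1) = 1" "(N + 2) / 2 + (q - 2) = 0" "N + (2 * q - 2) = 0"
    by (simp_all add: q_def field_simps)
  have PA: "P powr ((N + 2) / 2) * P powr (q - 1) = P" "P powr ((N + 2) / 2) * P powr (q - 2) = 1"
    unfolding powr_add[symmetric] e using P by simp_all
  have "P powr N * (P powr (q - 1))^2 = P powr (N + (2 * q - 2))"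
    using P by (simp add: powr_power flip: powr_add)
  then have PB: "P powr N * (P powr (q - 1))^2 = 1"
    unfolding e using P by simp
  have q: "2 * q = -(N - 2)" "4 * q * (q - 1) = N * (N - 2)" "4 * q^2 = (N - 2)^2"
    by (simp_all add: q_def power2_eq_square field_simps)
  have "(K * P powr q) powr (-(N + 2) / (N - 2)) * (2 * q * K * P powr (q - 1))
      = 2 * q * (K powr (-(N + 2) / (N - 2)) * K) * (P powr ((N + 2) / 2) * P powr (q - 1))"
    "(K * P powr q) powr (-(N + 2) / (N - 2)) * (4 * q * (q - 1) * K * P powr (q - 2))
      = 4 * q * (q - 1) * (K powr (-(N + 2) / (N - 2)) * K) * (P powr ((N + 2) / 2) * P powr (q - 2))"
    "(K * P powr q) powr (-2 * N / (N - 2)) * (2 * q * K * P powr (q - 1))^2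
      = 4 * q^2 * (K powr (-2 * N / (N - 2)) * K^2) * (P powr N * (P powr (q - 1))^2)"
    unfolding A B by (simp_all add: power_mult_distrib mult_ac)
  then show "(K * P powr q) powr (-(N + 2) / (N - 2)) * (2 * q * K * P powr (q - 1)) = -(N - 2) * E * P"
    and "(K * P powr q) powr (-(N + 2) / (N - 2)) * (4 * q * (q - 1) * K * P powr (q - 2)) = N * (N - 2) * E"
    and "(K * P powr q) powr (-2 * N / (N - 2)) * (2 * q * K * P powr (q - 1))^2 = (N - 2)^2 * E"
    unfolding KA KB PA PB q by simp_all
qed

lemma confHess_radial:
  fixes x y :: "real^'n::finite"
  defines "N \<equiv> real CARD('n)"
  assumes dim: "CARD('n) \<ge> 3" and K: "K > 0" and x: "c < (x - y) \<bullet> (x - y)"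
  shows "confHess (radial K (- ((N - 2) / 2)) c y) x = (- (2 * K powr (-4 / (N - 2)) * c)) *\<^sub>R mat 1"
proof -
  define q where "q = - ((N - 2) / 2)"
  define d where "d = x - y"
  define P where "P = d \<bullet> d - c"
  define g where "g = 2 * q * K * P powr (q - 1)"
  define b where "b = 4 * q * (q - 1) * K * P powr (q - 2)"
  define A where "A = (K * P powr q) powr (-(N + 2) / (N - 2))"
  define B where "B = (K * P powr q) powr (-2 * N / (N - 2))"
  define E where "E = K powr (-4 / (N - 2))"
  have N: "N > 2" using dim by (simp add: N_def)
  have "P > 0" using x by (simp add: P_def d_def)
  note powers = radial_conformal_powr_identities[OF N K this, folded q_def E_def]
  have "(norm (g *\<^sub>R d))^2 = g^2 * (P + c)"
    by (simp add: P_def power_mult_distrib power2_norm_eq_inner)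
  then have "confHess (radial K q c y) x
      = (-(2 / (N - 2)) * A) *\<^sub>R (g *\<^sub>R mat 1 + b *\<^sub>R outer d d)
      + ((2 * N / (N - 2)^2) * B) *\<^sub>R ((g * g) *\<^sub>R outer d d)
      - ((2 / (N - 2)^2) * B * (g^2 * (P + c))) *\<^sub>R mat 1"
    using grad_hess_radial[OF x]
    by (simp add: confHess_def Let_def N_def[symmetric] radial_def radial_grad_def radial_hess_def
        A_def B_def g_def b_def P_def d_def outer_scaleR)
  also have "\<dots> = (-(2 / (N - 2)) * (A * g) - (2 / (N - 2)^2) * (B * g^2) * (P + c)) *\<^sub>R mat 1
      + (-(2 / (N - 2)) * (A * b) + (2 * N / (N - 2)^2) * (B * g^2)) *\<^sub>R outer d d"
    by (simp add: algebra_simps power2_eq_square)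
  also have "\<dots> = (- (2 * E * c)) *\<^sub>R mat 1"
    \<comment> \<open>for the exponent \<open>-(n - 2)/2\<close> the rank-one terms cancel exactly\<close>
  proof -
    have "N - 2 \<noteq> 0" using N by simp
    then have "-(2 / (N - 2)) * (-(N - 2) * E * P) - (2 / (N - 2)^2) * ((N - 2)^2 * E) * (P + c) = - (2 * E * c)"
      "-(2 / (N - 2)) * (N * (N - 2) * E) + (2 * N / (N - 2)^2) * ((N - 2)^2 * E) = 0"
      by (simp_all add: field_simps)
    then show ?thesis unfolding A_def B_def g_def b_def powers by simp
  qed
  finally show ?thesis by (simp add: q_def E_def)
qed

lemma diag_mat_const: "diag_mat (\<chi> i. c) = c *\<^sub>R (mat 1 :: real^'n::finite^'n)"
  by (simp add: vec_eq_iff diag_mat_def mat_def)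

lemma eigvals_scaleR_mat_1: "eigvals (c *\<^sub>R (mat 1 :: real^'n::finite^'n)) = (\<chi> i. c)"
proof -
  define \<mu> where "\<mu> = eigvals (c *\<^sub>R (mat 1 :: real^'n^'n))"
  have "\<exists>\<mu> P. orthogonal_matrix P \<and> c *\<^sub>R (mat 1 :: real^'n^'n) = transpose P ** diag_mat \<mu> ** P"
    by (rule exI[of _ "\<chi> i. c"], rule exI[of _ "mat 1"])
      (simp add: diag_mat_const orthogonal_matrix_id transpose_mat)
  from someI_ex[OF this] obtain P where P: "orthogonal_matrix P"
    and e: "c *\<^sub>R (mat 1 :: real^'n^'n) = transpose P ** diag_mat \<mu> ** P"
    unfolding \<mu>_def eigvals_def by blast
  have "P ** (c *\<^sub>R (mat 1 :: real^'n^'n)) ** transpose P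
      = (P ** transpose P) ** diag_mat \<mu> ** (P ** transpose P)"
    unfolding e by (simp add: matrix_mul_assoc)
  then have "diag_mat \<mu> = c *\<^sub>R (mat 1 :: real^'n^'n)"
    using P unfolding orthogonal_matrix_def
    by (simp add: matrix_scalar_ac scalar_matrix_assoc[symmetric])
  then have "\<mu> $ i = c" for i
    by (simp add: vec_eq_iff diag_mat_def mat_def) (metis (full_types) mult_1_right)
  then show ?thesis unfolding \<mu>_def[symmetric] by (simp add: vec_eq_iff)
qed

section \<open>The canonical solutions\<close>

lemma u_out_eq_radial:
  fixes x y :: "real^'n::finite"
  assumes "\<rho> > 0" "\<rho> < norm (x - y)"
  shows "u_out \<beta> \<rho> y x
    = radial (\<beta> * \<rho> powr ((real CARD('n) - 2) / 2)) (- ((real CARD('n) - 2) / 2)) (\<rho>^2) y x"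
proof -
  have "\<rho>^2 < (x - y) \<bullet> (x - y)"
    using assms by (simp add: power2_norm_eq_inner[symmetric] power_strict_mono)
  then have "u_out \<beta> \<rho> y x = \<beta> * (\<rho> powr ((real CARD('n) - 2) / 2)
      / ((x - y) \<bullet> (x - y) - \<rho>^2) powr ((real CARD('n) - 2) / 2))"
    using assms(1) by (simp add: u_out_def power2_norm_eq_inner powr_divide)
  then show ?thesis
    by (simp only: radial_def powr_minus_divide) simp
qed

lemma open_outside_cball: "open {x::'a::real_normed_vector. \<rho> < norm (x - y)}"
  by (intro open_Collect_less continuous_intros)

lemma outside_cball_subset:
  fixes y :: "'a::real_inner"
  assumes "\<rho> > 0"
  shows "{x. \<rho> < norm (x - y)} \<subseteq> {x. \<rho>^2 < (x - y) \<bullet> (x - y)}"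
  using assms by (auto simp: power2_norm_eq_inner[symmetric] power_strict_mono)

lemma C2_on_u_out:
  fixes y :: "real^'n::finite"
  assumes "\<rho> > 0" "open S" "S \<subseteq> {x. \<rho> < norm (x - y)}"
  shows "C2_on S (u_out \<beta> \<rho> y)"
proof (rule C2_on_cong_open[OF assms(2)])
  show "C2_on S (radial (\<beta> * \<rho> powr ((real CARD('n) - 2) / 2)) (- ((real CARD('n) - 2) / 2)) (\<rho>^2) y)"
    using outside_cball_subset[OF assms(1)] assms(3) by (intro C2_on_radial) blast
qed (use assms(3) in \<open>auto simp: u_out_eq_radial[OF assms(1)]\<close>)

lemma confHess_u_out:
  fixes x y :: "real^'n::finite"
  defines "N \<equiv> real CARD('n)"
  assumes "CARD('n) \<ge> 3" "\<beta> > 0" "\<rho> > 0" "\<rho> < norm (x - y)"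
  shows "confHess (u_out \<beta> \<rho> y) x = (- (2 * \<beta> powr (-4 / (N - 2)))) *\<^sub>R mat 1"
proof -
  define K where "K = \<beta> * \<rho> powr ((N - 2) / 2)"
  have N: "N > 2" using assms(2) by (simp add: N_def)
  have "confHess (u_out \<beta> \<rho> y) x = confHess (radial K (- ((N - 2) / 2)) (\<rho>^2) y) x"
    by (rule confHess_cong_open[OF open_outside_cball])
      (use assms(5) in \<open>auto simp: u_out_eq_radial[OF assms(4)] K_def N_def\<close>)
  also have "\<dots> = (- (2 * K powr (-4 / (N - 2)) * \<rho>^2)) *\<^sub>R mat 1"
    using assms(2-5) outside_cball_subset[OF assms(4)]
    unfolding N_def by (intro confHess_radial) (auto simp: K_def)
  moreover have "K powr (-4 / (N - 2)) * \<rho>^2 = \<beta> powr (-4 / (N - 2))"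
  proof -
    have "(N - 2) / 2 * (-4 / (N - 2)) = -2" using N by (simp add: field_simps)
    then have "K powr (-4 / (N - 2)) = \<beta> powr (-4 / (N - 2)) * \<rho> powr -2"
      by (simp only: K_def powr_mult powr_powr)
    then show ?thesis using assms(4) by (simp add: powr_minus powr_numeral field_simps)
  qed
  ultimately show ?thesis by simp
qed

lemma eigvals_u_out:
  fixes x y :: "real^'n::finite"
  assumes "CARD('n) \<ge> 3" "\<beta> > 0" "\<rho> > 0" "\<rho> < norm (x - y)"
  shows "eigvals (- confHess (u_out \<beta> \<rho> y) x) = (\<chi> i. 2 * \<beta> powr (-4 / (real CARD('n) - 2)))"
  using confHess_u_out[OF assms] by (simp add: eigvals_scaleR_mat_1 flip: scaleR_minus_left)

lemma u_out_scale: "u_out (s * \<alpha>) \<rho> y x = s * u_out \<alpha> \<rho> y x"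
  by (simp add: u_out_def)

lemma u_out_pos:
  fixes x y :: "real^'n::finite"
  assumes "\<alpha> > 0" "\<rho> > 0" "\<rho> < norm (x - y)"
  shows "u_out \<alpha> \<rho> y x > 0"
proof -
  have "\<rho>^2 < norm (x - y)^2" using assms(2,3) by (simp add: power_strict_mono)
  then have "\<rho> / (norm (x - y)^2 - \<rho>^2) > 0" using assms(2) by simp
  then have "(\<rho> / (norm (x - y)^2 - \<rho>^2)) powr ((real CARD('n) - 2) / 2) > 0"
    by (simp only: powr_gt_zero)
  then show ?thesis using assms(1) by (simp add: u_out_def)
qed

lemma u_out_le_at_distance:
  fixes x y :: "real^'n::finite"
  assumes "CARD('n) \<ge> 2" "\<alpha> > 0" "0 < \<rho>" "\<rho> < R" "R \<le> norm (x - y)"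
  shows "u_out \<alpha> \<rho> y x \<le> \<alpha> * (\<rho> / (R^2 - \<rho>^2)) powr ((real CARD('n) - 2) / 2)"
proof -
  have "\<rho>^2 < R^2" "R^2 \<le> norm (x - y)^2" using assms(3-5) by (simp_all add: power_strict_mono power_mono)
  then have "0 \<le> \<rho> / (norm (x - y)^2 - \<rho>^2)" "\<rho> / (norm (x - y)^2 - \<rho>^2) \<le> \<rho> / (R^2 - \<rho>^2)"
    using assms(3) by (auto intro!: divide_left_mono divide_nonneg_pos)
  then show ?thesis
    using assms(1,2) unfolding u_out_def by (intro mult_left_mono powr_mono2) auto
qed

lemma continuous_on_u_out:
  assumes "\<rho> > 0"
  shows "continuous_on {x. \<rho> < norm (x - y)} (u_out \<alpha> \<rho> (y::real^'n::finite))"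
proof -
  have "\<rho>^2 < norm (x - y)^2" if "\<rho> < norm (x - y)" for x
    using assms that by (simp add: power_strict_mono)
  then show ?thesis
    unfolding u_out_def using assms by (intro continuous_intros) auto
qed

lemma u_out_le_of_smaller_radii:
  fixes x y :: "real^'n::finite" and W :: ereal
  assumes "R > 0" "R < norm (x - y)" "\<And>\<rho>. 0 < \<rho> \<Longrightarrow> \<rho> < R \<Longrightarrow> ereal (u_out \<alpha> \<rho> y x) \<le> W"
  shows "ereal (u_out \<alpha> R y x) \<le> W"
proof -
  have "R^2 < norm (x - y)^2" using assms(1,2) by (simp add: power_strict_mono)
  then have "isCont (\<lambda>\<rho>. ereal (u_out \<alpha> \<rho> y x)) R"
    using assms(1) unfolding u_out_def by (intro continuous_intros) auto
  then have "((\<lambda>\<rho>. ereal (u_out \<alpha> \<rho> y x)) \<longlongrightarrow> ereal (u_out \<alpha> R y x)) (at_left R)"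
    by (simp add: isCont_def filterlim_at_split)
  moreover have "eventually (\<lambda>\<rho>. ereal (u_out \<alpha> \<rho> y x) \<le> W) (at_left R)"
    using eventually_at_left_real[OF assms(1)] by eventually_elim (use assms(3) in auto)
  ultimately show ?thesis
    using tendsto_le[OF trivial_limit_at_left_real tendsto_const] by blast
qed

lemma scaleR_mem_closure_cone:
  fixes \<Gamma> :: "'a::real_normed_vector set"
  assumes "\<forall>\<mu>\<in>\<Gamma>. \<forall>t>0. t *\<^sub>R \<mu> \<in> \<Gamma>" "t > 0" "\<mu> \<in> closure \<Gamma>"
  shows "t *\<^sub>R \<mu> \<in> closure \<Gamma>"
proof -
  have "t *\<^sub>R \<mu> \<in> (*\<^sub>R) t ` closure \<Gamma>" using assms(3) by blast
  also have "\<dots> = closure ((*\<^sub>R) t ` \<Gamma>)" by (rule closure_scaleR)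
  also have "\<dots> \<subseteq> closure \<Gamma>" using assms(1,2) by (intro closure_mono) auto
  finally show ?thesis .
qed

lemma structural_scaleR_gt_one:
  assumes "structural f \<Gamma>" "\<mu> \<in> closure \<Gamma>" "f \<mu> = 1" "t > 1"
  shows "t *\<^sub>R \<mu> \<in> closure \<Gamma>" "f (t *\<^sub>R \<mu>) > 1"
proof -
  have cone: "\<forall>\<mu>\<in>\<Gamma>. \<forall>t>0. t *\<^sub>R \<mu> \<in> \<Gamma>"
    using assms(1) unfolding structural_def by (elim conjE) assumption
  have "\<exists>d>0. \<forall>\<mu>\<in>closure \<Gamma>. \<forall>t>0. f (t *\<^sub>R \<mu>) = t powr d * f \<mu>"
    using assms(1) unfolding structural_def by (elim conjE) assumption
  then obtain d where "d > 0" "\<forall>\<mu>\<in>closure \<Gamma>. \<forall>t>0. f (t *\<^sub>R \<mu>) = t powr d * f \<mu>"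
    by blast
  then show "f (t *\<^sub>R \<mu>) > 1" using assms(2-4) by simp
  show "t *\<^sub>R \<mu> \<in> closure \<Gamma>"
    using scaleR_mem_closure_cone[OF cone _ assms(2)] assms(4) by simp
qed

lemma visc_super_no_contact_u_out:
  fixes x0 :: "real^'n::finite"
  assumes dim: "CARD('n) \<ge> 3" and struct: "structural f \<Gamma>" and super: "visc_super f \<Gamma> \<Omega> w"
    and \<Omega>: "open \<Omega>" "\<Omega> \<subseteq> {x. \<rho> < norm (x - x0)}" and \<rho>: "\<rho> > 0"
    and \<beta>: "0 < \<beta>" "\<beta> < \<alpha>"
    and canon: "eigvals (- confHess (u_out \<alpha> \<rho> x0) z) \<in> closure \<Gamma>"
      "f (eigvals (- confHess (u_out \<alpha> \<rho> x0) z)) = 1"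
    and z: "z \<in> \<Omega>" "w z = ereal (u_out \<beta> \<rho> x0 z)"
    and below: "\<forall>x\<in>\<Omega>. ereal (u_out \<beta> \<rho> x0 x) \<le> w x"
  shows False
proof -
  define e where "e = -4 / (real CARD('n) - 2)"
  define t where "t = (\<beta> / \<alpha>) powr e"
  have z_out: "\<rho> < norm (z - x0)" using z(1) \<Omega>(2) by blast
  have "e < 0" using dim by (simp add: e_def)
  then have "t > 1"
    using \<beta> powr_less_mono2_neg[of e "\<beta> / \<alpha>" 1] by (simp add: t_def)
  have "eigvals (- confHess (u_out \<beta> \<rho> x0) z)
      = t *\<^sub>R eigvals (- confHess (u_out \<alpha> \<rho> x0) z)"
    using \<beta> z_out by (simp add: eigvals_u_out[OF dim _ \<rho>] vec_eq_iff t_def e_def powr_divide)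
  moreover have "eigvals (- confHess (u_out \<beta> \<rho> x0) z) \<notin> closure \<Gamma>
      \<or> f (eigvals (- confHess (u_out \<beta> \<rho> x0) z)) \<le> 1"
  proof -
    have "C2_on \<Omega> (u_out \<beta> \<rho> x0) \<and> w z = ereal (u_out \<beta> \<rho> x0 z)
        \<and> (\<exists>r>0. \<forall>x\<in>\<Omega> \<inter> ball z r. ereal (u_out \<beta> \<rho> x0 x) \<le> w x)"
      using C2_on_u_out[OF \<rho> \<Omega>] z(2) below by (auto intro: exI[of _ 1])
    then show ?thesis using super z(1) unfolding visc_super_def by blast
  qed
  ultimately show False
    using structural_scaleR_gt_one[OF struct canon \<open>t > 1\<close>] by (simp add: not_le)
qed

section \<open>Comparison by scaling\<close>

lemma compact_frontier_distance_ge: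
  fixes \<Omega> :: "'a::heine_borel set"
  assumes "bounded \<Omega>" "open \<Omega>" "\<delta> > 0"
  shows "compact {x\<in>\<Omega>. \<delta> \<le> infdist x (frontier \<Omega>)}"
proof -
  have "x \<in> \<Omega>" if "x \<in> closure \<Omega>" "\<delta> \<le> infdist x (frontier \<Omega>)" for x
  proof (rule ccontr)
    assume "x \<notin> \<Omega>"
    then have "x \<in> frontier \<Omega>" using that(1) interior_open[OF assms(2)] by (simp add: frontier_def)
    then show False using that(2) assms(3) by simp
  qed
  then have "{x\<in>\<Omega>. \<delta> \<le> infdist x (frontier \<Omega>)} = closure \<Omega> \<inter> {x. \<delta> \<le> infdist x (frontier \<Omega>)}"
    using closure_subset by blast
  also have "compact \<dots>"
    using assms(1) unfolding compact_eq_bounded_closed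
    by (intro conjI bounded_Int closed_Int closed_Collect_le continuous_intros
        continuous_on_infdist) auto
  finally show ?thesis .
qed

lemma lsc_on_strict_gap_compact:
  fixes w :: "real^'n::finite \<Rightarrow> ereal"
  assumes K: "compact K" "K \<subseteq> \<Omega>" and w: "lsc_on \<Omega> w" and v: "continuous_on \<Omega> v"
    and less: "\<forall>y\<in>K. ereal (s * v y) < w y"
  shows "\<exists>\<epsilon>>0. \<forall>y\<in>K. ereal ((s + \<epsilon>) * v y) < w y"
proof (rule ccontr)
  assume contra: "\<not> ?thesis"
  have "\<exists>y\<in>K. w y \<le> ereal ((s + inverse (real (Suc k))) * v y)" for k :: nat
  proof -
    have "inverse (real (Suc k)) > 0" by simp
    then have "\<not> (\<forall>y\<in>K. ereal ((s + inverse (real (Suc k))) * v y) < w y)"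
      using contra by blast
    then show ?thesis by (auto simp: not_less)
  qed
  then obtain ys where ys: "\<And>k. ys k \<in> K" "\<And>k. w (ys k) \<le> ereal ((s + inverse (real (Suc k))) * v (ys k))"
    by metis
  obtain l r where l: "l \<in> K" "strict_mono r" "(ys \<circ> r) \<longlonglongrightarrow> l"
    using K(1) ys(1) unfolding compact_def by metis
  have l\<Omega>: "l \<in> \<Omega>" using l(1) K(2) by blast
  obtain a where a: "ereal (s * v l) < ereal a" "ereal a < w l"
    using ereal_dense2[OF less[rule_format, OF l(1)]] by blast
  obtain e where e: "e > 0" "\<forall>y\<in>\<Omega>. dist y l < e \<longrightarrow> ereal a < w y"
    using w l\<Omega> a(2) unfolding lsc_on_def by blast
  have "(\<lambda>k. inverse (real (Suc (r k)))) \<longlonglongrightarrow> 0"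
    using LIMSEQ_subseq_LIMSEQ[OF LIMSEQ_inverse_real_of_nat l(2)] by (simp add: o_def)
  moreover have "(\<lambda>k. v ((ys \<circ> r) k)) \<longlonglongrightarrow> v l"
    using continuous_on_tendsto_compose[OF v l(3) l\<Omega>] ys(1) K(2) by (auto simp: subsetD)
  ultimately have "(\<lambda>k. (s + inverse (real (Suc (r k)))) * v ((ys \<circ> r) k)) \<longlonglongrightarrow> (s + 0) * v l"
    by (intro tendsto_intros)
  then have ev1: "eventually (\<lambda>k. (s + inverse (real (Suc (r k)))) * v ((ys \<circ> r) k) < a) sequentially"
    using order_tendstoD(2) a(1) by simp
  have ev2: "eventually (\<lambda>k. dist ((ys \<circ> r) k) l < e) sequentially"
    using l(3) e(1) by (rule tendstoD)
  obtain k where k: "(s + inverse (real (Suc (r k)))) * v (ys (r k)) < a" "dist (ys (r k)) l < e"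
    using eventually_happens'[OF _ eventually_conj[OF ev1 ev2]] by auto
  have "ereal a < w (ys (r k))" using e(2) ys(1) K(2) k(2) by blast
  also have "\<dots> \<le> ereal ((s + inverse (real (Suc (r k)))) * v (ys (r k)))" by (rule ys(2))
  also have "\<dots> < ereal a" using k(1) by simp
  finally have "ereal a < ereal a" .
  then show False by simp
qed

lemma lsc_on_strict_gap_blowup:
  fixes w :: "real^'n::finite \<Rightarrow> ereal"
  assumes \<Omega>: "bounded \<Omega>" "open \<Omega>" and w: "lsc_on \<Omega> w"
    and blowup: "\<forall>M::real. \<exists>\<delta>>0. \<forall>x\<in>\<Omega>. infdist x (frontier \<Omega>) < \<delta> \<longrightarrow> ereal M < w x"
    and v: "continuous_on \<Omega> v" "\<forall>x\<in>\<Omega>. 0 < v x \<and> v x \<le> V"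
    and s: "s \<ge> 0" "\<forall>x\<in>\<Omega>. ereal (s * v x) < w x"
  shows "\<exists>\<epsilon>>0. \<forall>x\<in>\<Omega>. ereal ((s + \<epsilon>) * v x) \<le> w x"
proof -
  obtain \<delta> where \<delta>: "\<delta> > 0" "\<forall>x\<in>\<Omega>. infdist x (frontier \<Omega>) < \<delta> \<longrightarrow> ereal ((s + 1) * V) < w x"
    using blowup by blast
  define K where "K = {x\<in>\<Omega>. \<delta> \<le> infdist x (frontier \<Omega>)}"
  have "compact K" unfolding K_def using compact_frontier_distance_ge[OF \<Omega> \<delta>(1)] .
  moreover have "K \<subseteq> \<Omega>" "\<forall>x\<in>K. ereal (s * v x) < w x" using s(2) by (auto simp: K_def)
  ultimately obtain \<epsilon> where \<epsilon>: "\<epsilon> > 0" "\<forall>x\<in>K. ereal ((s + \<epsilon>) * v x) < w x"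
    using lsc_on_strict_gap_compact[OF _ _ w v(1)] by blast
  have "ereal ((s + min \<epsilon> 1) * v x) \<le> w x" if x: "x \<in> \<Omega>" for x
  proof (cases "x \<in> K")
    case True
    have "(s + min \<epsilon> 1) * v x \<le> (s + \<epsilon>) * v x"
      using v(2) x by (intro mult_right_mono) auto
    then show ?thesis using \<epsilon>(2) True by (meson ereal_less_eq(3) less_imp_le order_trans)
  next
    case False
    then have "ereal ((s + 1) * V) < w x" using \<delta>(2) x by (auto simp: K_def)
    moreover have "(s + min \<epsilon> 1) * v x \<le> (s + 1) * V"
      using v(2) x s(1) by (intro mult_mono) auto
    ultimately show ?thesis by (meson ereal_less_eq(3) less_imp_le order_trans)
  qed
  then show ?thesis using \<epsilon>(1) by (intro exI[of _ "min \<epsilon> 1"]) auto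
qed

lemma lsc_on_comparison_by_scaling:
  fixes w :: "real^'n::finite \<Rightarrow> ereal"
  assumes \<Omega>: "bounded \<Omega>" "open \<Omega>" and w: "lsc_on \<Omega> w" "\<forall>x\<in>\<Omega>. w x > 0" "\<exists>p\<in>\<Omega>. w p \<noteq> \<infinity>"
    and blowup: "\<forall>M::real. \<exists>\<delta>>0. \<forall>x\<in>\<Omega>. infdist x (frontier \<Omega>) < \<delta> \<longrightarrow> ereal M < w x"
    and v: "continuous_on \<Omega> v" "\<forall>x\<in>\<Omega>. 0 < v x \<and> v x \<le> V"
    and no_contact: "\<And>s z. 0 < s \<Longrightarrow> s < 1 \<Longrightarrow> z \<in> \<Omega> \<Longrightarrow> w z = ereal (s * v z)
      \<Longrightarrow> \<forall>x\<in>\<Omega>. ereal (s * v x) \<le> w x \<Longrightarrow> False"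
  shows "\<forall>x\<in>\<Omega>. ereal (v x) \<le> w x"
proof -
  define S where "S = {s. 0 \<le> s \<and> (\<forall>x\<in>\<Omega>. ereal (s * v x) \<le> w x)}"
  define s0 where "s0 = Sup S"
  have "0 \<in> S" using w(2) by (auto simp: S_def zero_ereal_def less_imp_le)
  obtain p W where p: "p \<in> \<Omega>" "w p = ereal W" using w(2,3) by (metis ereal_cases not_MInfty_nonneg less_imp_le)
  have "bdd_above S"
  proof
    fix s assume "s \<in> S"
    then have "ereal (s * v p) \<le> ereal W" using p unfolding S_def by auto
    then show "s \<le> W / v p" using v(2) p(1) by (simp add: pos_le_divide_eq)
  qed
  then have s0: "0 \<le> s0" "\<And>s. s \<in> S \<Longrightarrow> s \<le> s0" using \<open>0 \<in> S\<close> by (auto simp: s0_def cSup_upper)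
  have s0_below: "ereal (s0 * v x) \<le> w x" if x: "x \<in> \<Omega>" for x
  proof (cases "w x")
    case (real r)
    have "s \<le> r / v x" if "s \<in> S" for s
      using that x real v(2) unfolding S_def by (auto simp: pos_le_divide_eq)
    then have "s0 \<le> r / v x" unfolding s0_def using \<open>0 \<in> S\<close> by (intro cSup_least) auto
    then show ?thesis using v(2) x real by (simp add: pos_le_divide_eq)
  qed (use w(2) x in auto)
  have "1 \<le> s0"
  proof (rule ccontr)
    assume "\<not> 1 \<le> s0"
    show False
    proof (cases "\<exists>z\<in>\<Omega>. w z = ereal (s0 * v z)")
      case True
      then obtain z where z: "z \<in> \<Omega>" "w z = ereal (s0 * v z)" by blast
      have "s0 \<noteq> 0" using z w(2) by (metis less_irrefl mult_zero_left zero_ereal_def)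
      then show False
        using no_contact[OF _ _ z] s0(1) s0_below \<open>\<not> 1 \<le> s0\<close> by auto
    next
      case False
      then have "\<forall>x\<in>\<Omega>. ereal (s0 * v x) < w x" using s0_below by (metis order.order_iff_strict)
      then obtain \<epsilon> where "\<epsilon> > 0" "\<forall>x\<in>\<Omega>. ereal ((s0 + \<epsilon>) * v x) \<le> w x"
        using lsc_on_strict_gap_blowup[OF \<Omega> w(1) blowup v s0(1)] by blast
      then have "s0 + \<epsilon> \<in> S" using s0(1) by (simp add: S_def)
      then show False using s0(2) \<open>\<epsilon> > 0\<close> by fastforce
    qed
  qed
  show ?thesis
  proof
    fix x assume x: "x \<in> \<Omega>"
    then have "v x \<le> s0 * v x" using \<open>1 \<le> s0\<close> v(2) by simp
    then have "ereal (v x) \<le> ereal (s0 * v x)" by simp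
    also have "\<dots> \<le> w x" using s0_below[OF x] .
    finally show "ereal (v x) \<le> w x" .
  qed
qed

lemma u_out_le_visc_super:
  fixes f :: "real^'n::finite \<Rightarrow> real" and x0 :: "real^'n"
  assumes dim: "CARD('n) \<ge> 3" and struct: "structural f \<Gamma>" and \<alpha>: "\<alpha> > 0"
    and canon: "\<And>x. x \<in> \<Omega> \<Longrightarrow> eigvals (- confHess (u_out \<alpha> \<rho> x0) x) \<in> closure \<Gamma>
         \<and> f (eigvals (- confHess (u_out \<alpha> \<rho> x0) x)) = 1"
    and \<Omega>: "bounded \<Omega>" "open \<Omega>" and super: "visc_super f \<Gamma> \<Omega> w" and wpos: "\<forall>x\<in>\<Omega>. w x > 0"
    and blowup: "\<forall>M::real. \<exists>\<delta>>0. \<forall>x\<in>\<Omega>. infdist x (frontier \<Omega>) < \<delta> \<longrightarrow> ereal M < w x"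
    and \<rho>: "0 < \<rho>" "\<rho> < R" and far: "\<forall>x\<in>\<Omega>. R \<le> norm (x - x0)"
  shows "\<forall>x\<in>\<Omega>. ereal (u_out \<alpha> \<rho> x0 x) \<le> w x"
proof (rule lsc_on_comparison_by_scaling[OF \<Omega> _ wpos _ blowup])
  show "lsc_on \<Omega> w" "\<exists>p\<in>\<Omega>. w p \<noteq> \<infinity>" using super unfolding visc_super_def by auto
  have \<Omega>_out: "\<Omega> \<subseteq> {x. \<rho> < norm (x - x0)}" using far \<rho>(2) by force
  show "continuous_on \<Omega> (u_out \<alpha> \<rho> x0)"
    using continuous_on_subset[OF continuous_on_u_out[OF \<rho>(1)] \<Omega>_out] .
  show "\<forall>x\<in>\<Omega>. 0 < u_out \<alpha> \<rho> x0 x \<and> u_out \<alpha> \<rho> x0 x \<le> \<alpha> * (\<rho> / (R^2 - \<rho>^2)) powr ((real CARD('n) - 2) / 2)"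
    using \<Omega>_out far dim \<alpha> \<rho> by (auto intro!: u_out_pos u_out_le_at_distance)
  fix s z
  assume "0 < s" "s < 1" "z \<in> \<Omega>" "w z = ereal (s * u_out \<alpha> \<rho> x0 z)"
    "\<forall>x\<in>\<Omega>. ereal (s * u_out \<alpha> \<rho> x0 x) \<le> w x"
  then show False
    using visc_super_no_contact_u_out[OF dim struct super \<Omega>(2) \<Omega>_out \<rho>(1), of "s * \<alpha>" \<alpha> z]
      canon \<alpha> by (simp add: u_out_scale)
qed

theorem lemma3p2:
  fixes f :: "real^'n::finite \<Rightarrow> real" and \<Gamma> :: "(real^'n) set"
    and \<Omega> :: "(real^'n) set" and w :: "real^'n \<Rightarrow> ereal"
    and \<alpha> R :: real and x0 :: "real^'n"
  assumes dim: "CARD('n) \<ge> 3"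
    and struct: "structural f \<Gamma>"
    and alpha_pos: "\<alpha> > 0"
    and alpha_canon: "\<And>R' y0 x. R' > 0 \<Longrightarrow> norm (x - y0) > R' \<Longrightarrow>
         eigvals (- confHess (u_out \<alpha> R' y0) x) \<in> closure \<Gamma>
         \<and> f (eigvals (- confHess (u_out \<alpha> R' y0) x)) = 1"
    and dom: "open \<Omega>" "connected \<Omega>" "bounded \<Omega>" "\<Omega> \<noteq> {}"
    and wpos: "\<forall>x\<in>\<Omega>. w x > 0"
    and super: "visc_super f \<Gamma> \<Omega> w"
    and blowup: "\<forall>M::real. \<exists>\<delta>>0. \<forall>x\<in>\<Omega>. infdist x (frontier \<Omega>) < \<delta> \<longrightarrow> ereal M < w x"
    and R_pos: "R > 0"
    and ball_out: "ball x0 R \<subseteq> - closure \<Omega>"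
  shows "\<forall>x\<in>\<Omega>. ereal (u_out \<alpha> R x0 x) \<le> w x \<and> u_out \<alpha> R x0 x > 0"
proof -
  have "\<Omega> \<inter> cball x0 R = {}"
    using open_Int_closure_eq_empty[OF dom(1), of "ball x0 R"] ball_out closure_subset R_pos by auto
  then have far: "\<forall>x\<in>\<Omega>. R < norm (x - x0)" by (auto simp: dist_norm norm_minus_commute)
  have below: "\<forall>x\<in>\<Omega>. ereal (u_out \<alpha> \<rho> x0 x) \<le> w x" if \<rho>: "0 < \<rho>" "\<rho> < R" for \<rho>
  proof (rule u_out_le_visc_super[OF dim struct alpha_pos _ dom(3,1) super wpos blowup \<rho>])
    show "\<forall>x\<in>\<Omega>. R \<le> norm (x - x0)" using far by (auto intro: less_imp_le)
    show "eigvals (- confHess (u_out \<alpha> \<rho> x0) x) \<in> closure \<Gamma>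
        \<and> f (eigvals (- confHess (u_out \<alpha> \<rho> x0) x)) = 1" if "x \<in> \<Omega>" for x
      using alpha_canon[OF \<rho>(1)] far that \<rho>(2) by force
  qed
  show ?thesis
    using u_out_le_of_smaller_radii[OF R_pos] below u_out_pos[OF alpha_pos R_pos] far by blast
qed

end
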